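(* Let $f\in\mathbb R[x_1,\dots,x_n]$ be a circuit polynomial $f(x)=\sum_{j=0}^r f_{\alpha(j)}x^{\alpha(j)}+f_{\alpha^\star}x^{\alpha^\star}$ with $r\le n$ and barycentric coordinates $\lambda_0,\dots,\lambda_r$ of $\alpha^\star$, and set $\Theta=\prod_{j=0}^r(f_{\alpha(j)}/\lambda_j)^{\lambda_j}$. Then $f$ is coercive on $\mathbb R^n$ if and only if one of the following holds: (a) $r=n$ and $f$ satisfies (C1), (C2), (C3); (b) $r=n-1$, $f$ satisfies (C1), (C2), (C3), and moreover $f_{\alpha^\star}>-\Theta$ if $\alpha^\star\in 2\mathbb N_0^n$, while $|f_{\alpha^\star}|<\Theta$ if $\alpha^\star\notin 2\mathbb N_0^n$.
   Context: A polynomial is coercive on $\mathbb R^n$ if $f(x)\to+\infty$ as $\|x\|\to+\infty$. A circuit polynomial is $f(x)=\sum_{j=0}^r f_{\alpha(j)}x^{\alpha(j)}+f_{\alpha^\star}x^{\alpha^\star}$ (with $f_{\alpha^\star}\ne 0$ and $\alpha^\star\in\mathbb N_0^n$) such that: $r\le n$; $\alpha(j)\in 2\mathbb N_0^n$ and $f_{\alpha(j)}>0$ for all $j$; the vertex set of the Newton polytope $\mathrm{conv}(A(f))$ is exactly $\{\alpha(0),\dots,\alpha(r)\}$ and these points are affinely independent; and $\alpha^\star=\sum_{j=0}^r\lambda_j\alpha(j)$ uniquely with all $\lambda_j>0$, $\sum_j\lambda_j=1$. Here $A(f)$ is the set of exponents with nonzero coefficient. The Newton polytope at infinity is $\mathrm{New}_\infty(f)=\mathrm{conv}(A(f)\cup\{0\})$,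 $V_0(f)$ its vertex set and $V(f)=V_0(f)\setminus\{0\}$. Conditions: (C1) $V(f)\subset 2\mathbb N_0^n$; (C2) $f_\alpha>0$ for all $\alpha\in V(f)$; (C3) for every $i\in\{1,\dots,n\}$, $V(f)$ contains a vector $2k_ie_i$ with $k_i\in\mathbb N$ ($e_i$ standard unit vectors). *)

theory Defs
  imports "HOL-Analysis.Analysis"
begin

text \<open>A real polynomial in the variables indexed by the finite type 'n is given by its
  coefficient function on exponent vectors ('n => nat), assumed finitely supported.\<close>

definition supp_poly :: "(('n::finite \<Rightarrow> nat) \<Rightarrow> real) \<Rightarrow> ('n \<Rightarrow> nat) set" where
  "supp_poly c = {a. c a \<noteq> 0}"

definition monom :: "real ^ 'n::finite \<Rightarrow> ('n \<Rightarrow> nat) \<Rightarrow> real" where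
  "monom x a = (\<Prod>i\<in>UNIV. (x $ i) ^ (a i))"

definition peval :: "(('n::finite \<Rightarrow> nat) \<Rightarrow> real) \<Rightarrow> real ^ 'n \<Rightarrow> real" where
  "peval c x = (\<Sum>a\<in>supp_poly c. c a * monom x a)"

definition emb :: "('n::finite \<Rightarrow> nat) \<Rightarrow> real ^ 'n" where
  "emb a = (\<chi> i. real (a i))"

definition even_exp :: "('n::finite \<Rightarrow> nat) \<Rightarrow> bool" where
  "even_exp a \<longleftrightarrow> (\<forall>i. even (a i))"

definition coercive :: "(real ^ 'n::finite \<Rightarrow> real) \<Rightarrow> bool" where
  "coercive f \<longleftrightarrow> filterlim f at_top at_infinity"

definition V0 :: "(('n::finite \<Rightarrow> nat) \<Rightarrow> real) \<Rightarrow> ('n \<Rightarrow> nat) set" where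
  "V0 c = {a \<in> supp_poly c \<union> {\<lambda>_. 0}.
            emb a extreme_point_of convex hull (emb ` (supp_poly c \<union> {\<lambda>_. 0}))}"

definition Vf :: "(('n::finite \<Rightarrow> nat) \<Rightarrow> real) \<Rightarrow> ('n \<Rightarrow> nat) set" where
  "Vf c = V0 c - {\<lambda>_. 0}"

definition C1 :: "(('n::finite \<Rightarrow> nat) \<Rightarrow> real) \<Rightarrow> bool" where
  "C1 c \<longleftrightarrow> (\<forall>a\<in>Vf c. even_exp a)"

definition C2 :: "(('n::finite \<Rightarrow> nat) \<Rightarrow> real) \<Rightarrow> bool" where
  "C2 c \<longleftrightarrow> (\<forall>a\<in>Vf c. c a > 0)"

definition C3 :: "(('n::finite \<Rightarrow> nat) \<Rightarrow> real) \<Rightarrow> bool" where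
  "C3 c \<longleftrightarrow> (\<forall>i. \<exists>k::nat. k \<ge> 1 \<and> (\<lambda>j. if j = i then 2 * k else 0) \<in> Vf c)"

end

theory Submission
  imports Defs
begin

text \<open>Split f = g + c(\<alpha>*) x^\<alpha>* with g = \<Sum>_j c(\<alpha>_j) x^\<alpha>_j \<ge> 0. Since \<alpha>* is a strict convex
  combination of the \<alpha>_j, it is never a vertex of New_\<infinity>(f), so (C1) and (C2) always hold.
  Coercivity forces a pure power along every coordinate axis; the highest one is a vertex of
  New_\<infinity>(f), which gives (C3), and as the vertices 2k_i e_i are distinct, n \<le> r + 1. Conversely,
  (C3) makes g grow at least linearly in |x|.

  Weighted AM-GM gives \<Theta> |x^\<alpha>*| \<le> g(x), with equality where all c(\<alpha>_j) |x^\<alpha>_j| / \<lambda>_j agree.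
  If r = n, then 0 lies in the affine hull of the \<alpha>_j; perturbing \<lambda> along such an affine
  combination writes \<alpha>* with positive weights of total mass s < 1, so |x^\<alpha>*| = O(g(x)^s) and f
  is coercive. If r = n - 1, the \<alpha>_j are exactly the 2k_i e_i, so the equality points reach every
  norm, and there f = g (1 \<plusminus> c(\<alpha>*) / \<Theta>), the sign being adjustable by reflecting a coordinate
  in which \<alpha>* is odd.\<close>

lemma prod_powr_le_weighted_sum:
  fixes w y :: "'a \<Rightarrow> real"
  assumes S: "finite S" and w: "\<And>i. i \<in> S \<Longrightarrow> w i > 0" and w_sum: "sum w S = 1"
    and y: "\<And>i. i \<in> S \<Longrightarrow> y i \<ge> 0"
  shows "(\<Prod>i\<in>S. y i powr w i) \<le> (\<Sum>i\<in>S. w i * y i)"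
proof (cases "\<exists>i\<in>S. y i = 0")
  case True
  then have "(\<Prod>i\<in>S. y i powr w i) = 0" using S by (auto intro: prod_zero)
  moreover have "(\<Sum>i\<in>S. w i * y i) \<ge> 0" using w y by (intro sum_nonneg) (simp add: less_imp_le)
  ultimately show ?thesis by simp
next
  case False
  then have y_pos: "\<And>i. i \<in> S \<Longrightarrow> y i > 0" using y by (simp add: less_le)
  have "S \<noteq> {}" using w_sum by auto
  have "(\<Sum>i\<in>S. w i * ln (y i)) \<le> ln (\<Sum>i\<in>S. w i *\<^sub>R y i)"
    using S \<open>S \<noteq> {}\<close> w w_sum y_pos
    by (intro concave_on_sum[OF _ _ ln_concave]) (auto simp: less_imp_le)
  moreover have "(\<Sum>i\<in>S. w i *\<^sub>R y i) > 0"
    using \<open>S \<noteq> {}\<close> S w y_pos by (intro sum_pos) auto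
  ultimately have "exp (\<Sum>i\<in>S. w i * ln (y i)) \<le> (\<Sum>i\<in>S. w i * y i)"
    by (simp add: ln_ge_iff)
  moreover have "exp (\<Sum>i\<in>S. w i * ln (y i)) = (\<Prod>i\<in>S. y i powr w i)"
    using S False by (auto simp: exp_sum powr_def mult.commute intro!: prod.cong)
  ultimately show ?thesis by simp
qed

lemma power_eq_prod_powr:
  fixes u :: real
  assumes J: "finite J" and u: "u \<ge> 0" and mu: "\<And>j. j \<in> J \<Longrightarrow> mu j > 0"
    and a: "real a = (\<Sum>j\<in>J. mu j * real (b j))"
  shows "u ^ a = (\<Prod>j\<in>J. (u ^ b j) powr mu j)"
proof (cases "u = 0")
  case True
  have "a = 0 \<longleftrightarrow> (\<forall>j\<in>J. mu j * real (b j) = 0)"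
    unfolding of_nat_eq_0_iff[symmetric, of a, where 'a = real] a
    using J mu by (intro sum_nonneg_eq_0_iff) (auto simp: less_imp_le)
  also have "\<dots> \<longleftrightarrow> (\<forall>j\<in>J. b j = 0)"
    using mu by (auto simp: less_imp_neq[symmetric])
  finally have "a = 0 \<longleftrightarrow> (\<forall>j\<in>J. b j = 0)" .
  with True J show ?thesis
    by (cases "a = 0") (auto simp: prod_zero)
next
  case False
  then have "(\<Prod>j\<in>J. (u ^ b j) powr mu j) = u powr (\<Sum>j\<in>J. mu j * real (b j))"
    using u by (simp add: powr_sum powr_realpow[symmetric] powr_powr mult.commute)
  then show ?thesis using False u by (simp add: powr_realpow flip: a)
qed

lemma abs_monom_eq_prod_powr:
  assumes "finite J" "\<And>j. j \<in> J \<Longrightarrow> mu j > 0"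
    and "\<And>i. real (a i) = (\<Sum>j\<in>J. mu j * real (b j i))"
  shows "\<bar>monom x a\<bar> = (\<Prod>j\<in>J. \<bar>monom x (b j)\<bar> powr mu j)"
proof -
  have "\<bar>monom x a\<bar> = (\<Prod>i\<in>UNIV. \<Prod>j\<in>J. (\<bar>x $ i\<bar> ^ b j i) powr mu j)"
    unfolding monom_def abs_prod power_abs
    using assms by (intro prod.cong refl power_eq_prod_powr) auto
  also have "\<dots> = (\<Prod>j\<in>J. \<bar>monom x (b j)\<bar> powr mu j)"
    by (subst prod.swap) (simp add: monom_def abs_prod power_abs prod_powr_distrib)
  finally show ?thesis .
qed

lemma monom_nonneg_if_even_exp: "even_exp a \<Longrightarrow> monom x a \<ge> 0"
  unfolding monom_def even_exp_def by (intro prod_nonneg) (auto simp: zero_le_even_power)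

lemma monom_reflect:
  "monom (\<chi> l. if l = i then - x $ l else x $ l) a = (- 1) ^ a i * monom x a"
proof -
  have "monom (\<chi> l. if l = i then - x $ l else x $ l) a
      = (\<Prod>l\<in>UNIV. (if l = i then (- 1) ^ a i else 1) * (x $ l) ^ a l)"
    unfolding monom_def by (intro prod.cong refl) (simp add: power_minus[of "x $ i"])
  also have "\<dots> = (- 1) ^ a i * monom x a"
    unfolding prod.distrib monom_def by simp
  finally show ?thesis .
qed

definition axis_exp :: "'n \<Rightarrow> nat \<Rightarrow> 'n \<Rightarrow> nat" where
  "axis_exp i d = (\<lambda>l. if l = i then d else 0)"

lemma monom_axis_exp: "monom x (axis_exp i d) = (x $ i) ^ d"
proof -
  have "monom x (axis_exp i d) = (\<Prod>l\<in>UNIV. if l = i then (x $ i) ^ d else 1)"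
    unfolding monom_def axis_exp_def by (intro prod.cong) auto
  then show ?thesis by simp
qed

lemma monom_axis:
  "monom (axis i t) a = (if \<forall>l. l \<noteq> i \<longrightarrow> a l = 0 then t ^ a i else 0)"
proof (cases "\<forall>l. l \<noteq> i \<longrightarrow> a l = 0")
  case True
  then have "monom (axis i t) a = (\<Prod>l\<in>UNIV. if l = i then t ^ a i else 1)"
    unfolding monom_def axis_def by (intro prod.cong) auto
  then show ?thesis using True by simp
next
  case False
  then obtain l where "l \<noteq> i" "a l \<noteq> 0" by auto
  then show ?thesis using False unfolding monom_def axis_def by (auto intro!: prod_zero bexI[of _ l])
qed

lemma emb_inj: "emb a = emb b \<Longrightarrow> a = b"
  by (auto simp: emb_def vec_eq_iff)

lemma not_extreme_point_if_convex_comb: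
  fixes u :: "'i \<Rightarrow> 'a::real_vector"
  assumes "convex S" "finite I" "\<And>i. i \<in> I \<Longrightarrow> u i \<in> S - {x}"
    and "\<And>i. i \<in> I \<Longrightarrow> w i \<ge> 0" "sum w I = 1" "(\<Sum>i\<in>I. w i *\<^sub>R u i) = x"
  shows "\<not> x extreme_point_of S"
proof
  assume "x extreme_point_of S"
  then have "convex (S - {x})" using assms(1) by (simp add: extreme_point_of_stillconvex)
  then have "(\<Sum>i\<in>I. w i *\<^sub>R u i) \<in> S - {x}" using assms by (intro convex_sum) auto
  then show False using assms(6) by simp
qed

lemma extreme_point_of_top_axis_power:
  fixes A :: "('n::finite \<Rightarrow> nat) set"
  assumes A: "finite A" and a: "a \<in> A" "\<forall>l. l \<noteq> i \<longrightarrow> a l = 0"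
    and top: "\<And>b. b \<in> A \<Longrightarrow> \<forall>l. l \<noteq> i \<longrightarrow> b l = 0 \<Longrightarrow> b i \<le> a i"
  shows "emb a extreme_point_of convex hull (emb ` A)"
proof -
  \<comment> \<open>The functional y_i - M * (\<Sum>l \<noteq> i. y_l) attains its maximum over emb ` A only at emb a.\<close>
  define M where "M = (\<Sum>b\<in>A. real (b i)) + 1"
  have M_pos: "M > 0" unfolding M_def by (simp add: add_nonneg_pos sum_nonneg)
  define w :: "real ^ 'n" where "w = (\<chi> l. if l = i then 1 else - M)"
  have w_emb: "w \<bullet> emb b = real (b i) - M * (\<Sum>l\<in>UNIV - {i}. real (b l))" for b
  proof -
    have "w \<bullet> emb b = w $ i * real (b i) + (\<Sum>l\<in>UNIV - {i}. w $ l * real (b l))"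
      by (simp add: inner_vec_def emb_def sum.remove)
    also have "(\<Sum>l\<in>UNIV - {i}. w $ l * real (b l)) = - M * (\<Sum>l\<in>UNIV - {i}. real (b l))"
      by (simp add: w_def sum_distrib_left)
    finally show ?thesis by (simp add: w_def)
  qed
  have below: "w \<bullet> emb b < real (a i)" if b: "b \<in> A" "b \<noteq> a" for b
  proof (cases "\<forall>l. l \<noteq> i \<longrightarrow> b l = 0")
    case True
    then have "b i \<noteq> a i" using b(2) a(2) by (metis ext)
    then have "b i < a i" using top[OF b(1) True] by simp
    then show ?thesis using True by (simp add: w_emb)
  next
    case False
    then obtain l where l: "l \<noteq> i" "b l \<noteq> 0" by auto
    have "1 \<le> real (b l)" using l by simp
    also have "\<dots> \<le> (\<Sum>l\<in>UNIV - {i}. real (b l))" using l by (intro member_le_sum) auto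
    finally have "M * 1 \<le> M * (\<Sum>l\<in>UNIV - {i}. real (b l))"
      using M_pos by (intro mult_left_mono) simp_all
    then have "M \<le> M * (\<Sum>l\<in>UNIV - {i}. real (b l))" by simp
    moreover have "real (b i) < M"
      using member_le_sum[of b A "\<lambda>b. real (b i)"] A b unfolding M_def by simp
    ultimately show ?thesis using w_emb[of b] of_nat_0_le_iff[of "a i"] by linarith
  qed
  have "convex hull (emb ` (A - {a})) \<subseteq> {y. w \<bullet> y < real (a i)}"
    using below by (intro hull_minimal convex_halfspace_lt) auto
  moreover have "w \<bullet> emb a = real (a i)" using a by (simp add: w_emb)
  ultimately have "emb a \<notin> convex hull (emb ` (A - {a}))" by auto
  then have "emb a extreme_point_of convex hull (insert (emb a) (emb ` (A - {a})))"
    using A by (intro extreme_point_of_convex_hull_insert) auto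
  moreover have "insert (emb a) (emb ` (A - {a})) = emb ` A" using a by auto
  ultimately show ?thesis by simp
qed

lemma coercive_imp_axis_power:
  fixes c :: "('n::finite \<Rightarrow> nat) \<Rightarrow> real"
  assumes "coercive (peval c)"
  obtains a where "a \<in> supp_poly c" "a \<noteq> (\<lambda>_. 0)" "\<forall>l. l \<noteq> i \<longrightarrow> a l = 0"
proof -
  have "\<exists>a\<in>supp_poly c. a \<noteq> (\<lambda>_. 0) \<and> (\<forall>l. l \<noteq> i \<longrightarrow> a l = 0)"
  proof (rule ccontr)
    assume "\<not> ?thesis"
    then have pure_zero: "a = (\<lambda>_. 0)" if "a \<in> supp_poly c" "\<forall>l. l \<noteq> i \<longrightarrow> a l = 0" for a
      using that by blast
    have const: "peval c (axis i t) = peval c (axis i 0)" for t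
      unfolding peval_def by (intro sum.cong refl) (auto simp: monom_axis dest: pure_zero)
    obtain b where b: "\<And>x. b \<le> norm x \<Longrightarrow> peval c (axis i 0) + 1 \<le> peval c x"
      using assms unfolding coercive_def filterlim_at_top eventually_at_infinity by blast
    have "b \<le> norm (axis i \<bar>b\<bar> :: real ^ 'n)"
      using component_le_norm_cart[of "axis i \<bar>b\<bar>" i] by simp
    then show False using b[of "axis i \<bar>b\<bar>"] const[of "\<bar>b\<bar>"] by simp
  qed
  then show ?thesis using that by blast
qed

lemma filterlim_at_top_if_ge_const_mult:
  fixes f g :: "'a \<Rightarrow> real"
  assumes "filterlim g at_top F" "eps > 0" "eventually (\<lambda>x. eps * g x \<le> f x) F"
  shows "filterlim f at_top F"
  using filterlim_at_top_mono[OF filterlim_tendsto_pos_mult_at_top[OF tendsto_const assms(2,1)]]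
    assms(3) .

lemma filterlim_at_top_add_sublinear:
  fixes g h :: "'a \<Rightarrow> real"
  assumes g: "filterlim g at_top F" and s: "s < 1"
    and h: "\<And>x. \<bar>h x\<bar> \<le> K * g x powr s"
  shows "filterlim (\<lambda>x. g x + h x) at_top F"
proof -
  have "((\<lambda>y. y powr (s - 1)) \<longlongrightarrow> 0) at_top"
    using s by (intro tendsto_neg_powr filterlim_ident) simp
  then have "((\<lambda>y. K * y powr (s - 1)) \<longlongrightarrow> 0) at_top"
    by (rule tendsto_mult_right_zero)
  from order_tendstoD(2)[OF this, of "1 / 2"]
  have "eventually (\<lambda>y::real. K * y powr (s - 1) < 1 / 2 \<and> y > 0) at_top"
    by (intro eventually_conj eventually_gt_at_top) simp_all
  then have "eventually (\<lambda>y. K * y powr s \<le> y / 2) at_top"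
  proof (rule eventually_mono)
    fix y :: real assume y: "K * y powr (s - 1) < 1 / 2 \<and> y > 0"
    have "K * y powr s = (K * y powr (s - 1)) * y" using y by (simp add: powr_diff)
    also have "\<dots> \<le> 1 / 2 * y" using y by (intro mult_right_mono) simp_all
    finally show "K * y powr s \<le> y / 2" by simp
  qed
  then have "eventually (\<lambda>x. K * g x powr s \<le> g x / 2) F"
    using g by (rule eventually_compose_filterlim)
  then have "eventually (\<lambda>x. 1 / 2 * g x \<le> g x + h x) F"
  proof (rule eventually_mono)
    fix x assume "K * g x powr s \<le> g x / 2"
    then show "1 / 2 * g x \<le> g x + h x" using h[of x] by linarith
  qed
  then show ?thesis by (rule filterlim_at_top_if_ge_const_mult[OF g, rotated]) simp
qed

lemma exists_pos_perturbation:
  fixes lam nu :: "'i \<Rightarrow> real"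
  assumes I: "finite I" and lam: "\<And>j. j \<in> I \<Longrightarrow> lam j > 0"
  obtains t where "0 < t" "t < 1" "\<And>j. j \<in> I \<Longrightarrow> lam j - t * nu j > 0"
proof -
  have "\<forall>\<^sub>F t in at_right 0. lam j - t * nu j > 0" if "j \<in> I" for j
  proof (rule order_tendstoD(1))
    show "((\<lambda>t. lam j - t * nu j) \<longlongrightarrow> lam j - 0 * nu j) (at_right 0)"
      by (intro tendsto_intros)
  qed (use lam that in simp)
  then have "\<forall>\<^sub>F t in at_right 0. (\<forall>j\<in>I. lam j - t * nu j > 0) \<and> 0 < t \<and> t < 1"
    using I by (intro eventually_conj eventually_ball_finite eventually_at_right_less
        order_tendstoD(2)[OF tendsto_ident_at]) auto
  then obtain t where "(\<forall>j\<in>I. lam j - t * nu j > 0) \<and> 0 < t \<and> t < 1"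
    using eventually_happens'[OF trivial_limit_at_right_real] by blast
  then show ?thesis using that by blast
qed

lemma abs_minus_one_le_even_power:
  fixes y :: real
  assumes "k \<ge> 1"
  shows "\<bar>y\<bar> - 1 \<le> y ^ (2 * k)"
proof (cases "\<bar>y\<bar> \<ge> 1")
  case True
  then have "\<bar>y\<bar> ^ 1 \<le> \<bar>y\<bar> ^ (2 * k)" using assms by (intro power_increasing) auto
  then show ?thesis by (simp add: power_even_abs)
next
  case False
  moreover have "0 \<le> y ^ (2 * k)" by (simp add: zero_le_even_power)
  ultimately show ?thesis by linarith
qed

locale circuit_poly =
  fixes c :: "('n::finite \<Rightarrow> nat) \<Rightarrow> real"
    and r :: nat
    and \<alpha> :: "nat \<Rightarrow> ('n \<Rightarrow> nat)"
    and astar :: "'n \<Rightarrow> nat"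
    and lam :: "nat \<Rightarrow> real"
  assumes r_le: "r \<le> CARD('n)"
    and supp: "supp_poly c = \<alpha> ` {..r} \<union> {astar}"
    and inj: "inj_on \<alpha> {..r}"
    and astar_notin: "astar \<notin> \<alpha> ` {..r}"
    and even_vert: "\<forall>j\<le>r. even_exp (\<alpha> j)"
    and pos_vert: "\<forall>j\<le>r. c (\<alpha> j) > 0"
    and aff_indep: "\<not> affine_dependent (emb ` \<alpha> ` {..r})"
    and lam_pos: "\<forall>j\<le>r. lam j > 0"
    and lam_sum: "(\<Sum>j\<le>r. lam j) = 1"
    and lam_comb: "(\<Sum>j\<le>r. lam j *\<^sub>R emb (\<alpha> j)) = emb astar"
begin

definition vertex_sum :: "real ^ 'n \<Rightarrow> real" where
  "vertex_sum x = (\<Sum>j\<le>r. c (\<alpha> j) * monom x (\<alpha> j))"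

lemma peval_eq: "peval c x = vertex_sum x + c astar * monom x astar"
proof -
  have "peval c x = (\<Sum>a\<in>\<alpha> ` {..r}. c a * monom x a) + c astar * monom x astar"
    unfolding peval_def supp using astar_notin by (subst sum.union_disjoint) auto
  then show ?thesis unfolding vertex_sum_def using inj by (simp add: sum.reindex)
qed

lemma monom_vertex_nonneg: "j \<le> r \<Longrightarrow> monom x (\<alpha> j) \<ge> 0"
  using even_vert monom_nonneg_if_even_exp by blast

lemma vertex_term_le_vertex_sum: "j \<le> r \<Longrightarrow> c (\<alpha> j) * monom x (\<alpha> j) \<le> vertex_sum x"
  unfolding vertex_sum_def using pos_vert monom_vertex_nonneg
  by (intro member_le_sum) (auto intro: mult_nonneg_nonneg less_imp_le)

lemma vertex_sum_nonneg: "vertex_sum x \<ge> 0"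
  unfolding vertex_sum_def using pos_vert monom_vertex_nonneg
  by (intro sum_nonneg) (auto intro: mult_nonneg_nonneg less_imp_le)

definition cmin :: real where
  "cmin = Min ((\<lambda>j. c (\<alpha> j)) ` {..r})"

lemma cmin_pos: "cmin > 0"
  unfolding cmin_def using pos_vert by (subst Min_gr_iff) auto

lemma cmin_le: "j \<le> r \<Longrightarrow> cmin \<le> c (\<alpha> j)"
  unfolding cmin_def by (rule Min_le) auto

lemma monom_vertex_le:
  assumes "j \<le> r"
  shows "monom x (\<alpha> j) \<le> vertex_sum x / cmin"
proof -
  have "cmin * monom x (\<alpha> j) \<le> c (\<alpha> j) * monom x (\<alpha> j)"
    using assms by (intro mult_right_mono cmin_le monom_vertex_nonneg)
  also have "\<dots> \<le> vertex_sum x" using assms by (rule vertex_term_le_vertex_sum)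
  finally show ?thesis using cmin_pos by (simp add: field_simps)
qed

lemma astar_component: "real (astar i) = (\<Sum>j\<le>r. lam j * real (\<alpha> j i))"
  using arg_cong[OF lam_comb, of "\<lambda>v. v $ i"] by (simp add: emb_def)

lemma astar_not_extreme: "\<not> emb astar extreme_point_of convex hull (emb ` (supp_poly c \<union> {\<lambda>_. 0}))"
proof (rule not_extreme_point_if_convex_comb[OF convex_convex_hull finite_atMost _ _ lam_sum lam_comb])
  fix j assume "j \<in> {..r}"
  then show "emb (\<alpha> j) \<in> convex hull (emb ` (supp_poly c \<union> {\<lambda>_. 0})) - {emb astar}"
    using supp astar_notin emb_inj by (fastforce intro: hull_inc)
qed (use lam_pos in \<open>simp add: less_imp_le\<close>)

lemma Vf_subset: "Vf c \<subseteq> \<alpha> ` {..r}"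
  using astar_not_extreme supp unfolding Vf_def V0_def by auto

lemma C1: "C1 c"
  unfolding C1_def using Vf_subset even_vert by auto

lemma C2: "C2 c"
  unfolding C2_def using Vf_subset pos_vert by auto

lemma coercive_imp_C3:
  assumes "coercive (peval c)"
  shows "C3 c"
  unfolding C3_def
proof
  fix i
  define A where "A = supp_poly c \<union> {\<lambda>_. 0}"
  define P where "P = {b \<in> A. \<forall>l. l \<noteq> i \<longrightarrow> b l = 0}"
  have "finite A" unfolding A_def supp by simp
  obtain a where a: "a \<in> supp_poly c" "a \<noteq> (\<lambda>_. 0)" "\<forall>l. l \<noteq> i \<longrightarrow> a l = 0"
    using coercive_imp_axis_power[OF assms] .
  have "a \<in> P" using a unfolding P_def A_def by simp
  have "finite P" using \<open>finite A\<close> unfolding P_def by simp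
  obtain a_max where a_max: "a_max \<in> P" "\<And>b. b \<in> P \<Longrightarrow> b i \<le> a_max i"
    using ex_has_greatest_nat[of "\<lambda>b. b \<in> P" a "\<lambda>b. b i" "Suc (Max ((\<lambda>b. b i) ` P))"]
      \<open>a \<in> P\<close> \<open>finite P\<close> by (auto intro: le_imp_less_Suc Max_ge)
  have "a i > 0" using a by (metis ext gr0I)
  then have "a_max i > 0" using a_max(2)[OF \<open>a \<in> P\<close>] by simp
  have "emb a_max extreme_point_of convex hull (emb ` A)"
    using \<open>finite A\<close> a_max unfolding P_def by (intro extreme_point_of_top_axis_power) auto
  then have "a_max \<in> Vf c"
    using a_max(1) \<open>a_max i > 0\<close> unfolding Vf_def V0_def P_def A_def by auto
  then obtain j where j: "j \<le> r" "a_max = \<alpha> j" using Vf_subset by auto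
  then obtain k where k: "a_max i = 2 * k" using even_vert unfolding even_exp_def by (metis evenE)
  have "a_max = (\<lambda>l. if l = i then 2 * k else 0)" using a_max(1) k unfolding P_def by auto
  then show "\<exists>k\<ge>1. (\<lambda>l. if l = i then 2 * k else 0) \<in> Vf c"
    using \<open>a_max \<in> Vf c\<close> \<open>a_max i > 0\<close> k by (intro exI[of _ k]) auto
qed

lemma C3_obtain_axis_vertices:
  assumes "C3 c"
  obtains k J
  where "\<And>i. k i \<ge> 1" "\<And>i. J i \<le> r" "\<And>i. \<alpha> (J i) = axis_exp i (2 * k i)" "inj J"
proof -
  have "\<exists>k j. k \<ge> 1 \<and> j \<le> r \<and> \<alpha> j = axis_exp i (2 * k)" for i
  proof -
    obtain k where "k \<ge> 1" "axis_exp i (2 * k) \<in> Vf c"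
      using assms unfolding C3_def axis_exp_def by (meson that)
    moreover from Vf_subset this(2) have "axis_exp i (2 * k) \<in> \<alpha> ` {..r}" ..
    then obtain j where "j \<in> {..r}" "axis_exp i (2 * k) = \<alpha> j" ..
    ultimately show ?thesis by (intro exI[of _ k] exI[of _ j]) simp
  qed
  then obtain k J where "\<forall>i. k i \<ge> 1 \<and> J i \<le> r \<and> \<alpha> (J i) = axis_exp i (2 * k i)"
    by metis
  then have kJ: "\<And>i. k i \<ge> 1" "\<And>i. J i \<le> r" "\<And>i. \<alpha> (J i) = axis_exp i (2 * k i)"
    by auto
  have "inj J"
  proof (rule injI)
    fix i i' assume "J i = J i'"
    then have "axis_exp i (2 * k i) i = axis_exp i' (2 * k i') i" by (simp flip: kJ(3))
    then show "i = i'" using kJ(1)[of i] unfolding axis_exp_def by (simp split: if_splits)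
  qed
  with kJ show ?thesis by (rule that)
qed

lemma C3_imp_card_le:
  assumes "C3 c"
  shows "CARD('n) \<le> r + 1"
proof -
  obtain k J where "\<And>i. k i \<ge> 1" "\<And>i. J i \<le> r" "\<And>i. \<alpha> (J i) = axis_exp i (2 * k i)" "inj J"
    using C3_obtain_axis_vertices[OF assms] by metis
  then have "card (UNIV :: 'n set) \<le> card {..r}"
    by (intro card_inj_on_le[of J]) auto
  then show ?thesis by simp
qed

lemma vertex_sum_ge_norm:
  assumes "C3 c"
  shows "cmin * norm x - cmin * CARD('n) \<le> vertex_sum x"
proof -
  obtain k J where kJ: "\<And>i. k i \<ge> 1" "\<And>i. J i \<le> r" "\<And>i. \<alpha> (J i) = axis_exp i (2 * k i)" "inj J"
    using C3_obtain_axis_vertices[OF assms] by metis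
  have "cmin * norm x - cmin * CARD('n) \<le> (\<Sum>i\<in>UNIV. cmin * (\<bar>x $ i\<bar> - 1))"
    using mult_left_mono[OF norm_le_l1_cart[of x], of cmin] cmin_pos
    by (simp add: sum_distrib_left[symmetric] sum_subtractf right_diff_distrib)
  also have "\<dots> \<le> (\<Sum>i\<in>UNIV. c (\<alpha> (J i)) * monom x (\<alpha> (J i)))"
  proof (intro sum_mono)
    fix i
    have "cmin * (\<bar>x $ i\<bar> - 1) \<le> cmin * (x $ i) ^ (2 * k i)"
      using cmin_pos abs_minus_one_le_even_power[OF kJ(1)] by simp
    also have "\<dots> \<le> c (\<alpha> (J i)) * (x $ i) ^ (2 * k i)"
      using cmin_le[OF kJ(2)] by (intro mult_right_mono) (simp_all add: zero_le_even_power)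
    finally show "cmin * (\<bar>x $ i\<bar> - 1) \<le> c (\<alpha> (J i)) * monom x (\<alpha> (J i))"
      by (simp add: kJ(3) monom_axis_exp)
  qed
  also have "\<dots> = (\<Sum>j\<in>J ` UNIV. c (\<alpha> j) * monom x (\<alpha> j))"
    using kJ(4) by (simp add: sum.reindex)
  also have "\<dots> \<le> vertex_sum x"
    unfolding vertex_sum_def using kJ(2) pos_vert monom_vertex_nonneg
    by (intro sum_mono2) (auto intro: mult_nonneg_nonneg less_imp_le)
  finally show ?thesis .
qed

lemma vertex_sum_tendsto_at_top:
  assumes "C3 c"
  shows "filterlim vertex_sum at_top at_infinity"
proof (rule filterlim_at_top_mono[OF _ always_eventually[OF allI[OF vertex_sum_ge_norm[OF assms]]]])
  have "filterlim (\<lambda>x::real ^ 'n. - (cmin * CARD('n)) + cmin * norm x) at_top at_infinity"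
    by (intro filterlim_tendsto_add_at_top[OF tendsto_const]
        filterlim_tendsto_pos_mult_at_top[OF tendsto_const cmin_pos filterlim_norm_at_top])
  then show "filterlim (\<lambda>x::real ^ 'n. cmin * norm x - cmin * CARD('n)) at_top at_infinity"
    by simp
qed

definition Theta :: real where
  "Theta = (\<Prod>j\<le>r. (c (\<alpha> j) / lam j) powr lam j)"

lemma Theta_pos: "Theta > 0"
  unfolding Theta_def using pos_vert lam_pos by (intro prod_pos) force

lemma Theta_mul_abs_monom:
  "Theta * \<bar>monom x astar\<bar> = (\<Prod>j\<le>r. (c (\<alpha> j) / lam j * monom x (\<alpha> j)) powr lam j)"
proof -
  have "\<bar>monom x astar\<bar> = (\<Prod>j\<le>r. monom x (\<alpha> j) powr lam j)"
    using lam_pos astar_component monom_vertex_nonneg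
    by (subst abs_monom_eq_prod_powr[where J = "{..r}" and mu = lam and b = \<alpha>]) auto
  then show ?thesis unfolding Theta_def by (simp only: prod.distrib[symmetric] powr_mult)
qed

lemma Theta_mul_abs_monom_le: "Theta * \<bar>monom x astar\<bar> \<le> vertex_sum x"
proof -
  have "Theta * \<bar>monom x astar\<bar> \<le> (\<Sum>j\<le>r. lam j * (c (\<alpha> j) / lam j * monom x (\<alpha> j)))"
    unfolding Theta_mul_abs_monom using lam_pos lam_sum pos_vert monom_vertex_nonneg
    by (intro prod_powr_le_weighted_sum) (auto simp: less_imp_le intro!: divide_nonneg_pos)
  also have "\<dots> = vertex_sum x"
    unfolding vertex_sum_def using lam_pos by (intro sum.cong) auto
  finally show ?thesis .
qed

lemma balanced_point_values:
  assumes "\<tau> > 0" and balanced: "\<And>j. j \<le> r \<Longrightarrow> c (\<alpha> j) / lam j * monom x (\<alpha> j) = \<tau>"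
  shows "vertex_sum x = \<tau>" "Theta * \<bar>monom x astar\<bar> = \<tau>"
proof -
  have "vertex_sum x = (\<Sum>j\<le>r. lam j * \<tau>)"
    unfolding vertex_sum_def using lam_pos by (intro sum.cong) (auto simp flip: balanced)
  then show "vertex_sum x = \<tau>" using lam_sum by (simp flip: sum_distrib_right)
  have "Theta * \<bar>monom x astar\<bar> = (\<Prod>j\<le>r. \<tau> powr lam j)"
    unfolding Theta_mul_abs_monom using balanced by simp
  also have "\<dots> = \<tau>" using assms(1) lam_sum by (simp flip: powr_sum)
  finally show "Theta * \<bar>monom x astar\<bar> = \<tau>" .
qed

lemma coercive_if_Theta_bound:
  assumes C3: "C3 c"
    and bound: "if even_exp astar then c astar > - Theta else \<bar>c astar\<bar> < Theta"
  shows "coercive (peval c)"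
proof -
  obtain eps where eps: "eps > 0" "\<And>x. eps * vertex_sum x \<le> peval c x"
  proof (cases "even_exp astar \<and> c astar \<ge> 0")
    case True
    then have "1 * vertex_sum x \<le> peval c x" for x
      using monom_nonneg_if_even_exp[of astar x] by (simp add: peval_eq)
    then show ?thesis by (rule that[rotated]) simp
  next
    case False
    then have "\<bar>c astar\<bar> < Theta" using bound by (auto split: if_splits)
    have pos: "1 - \<bar>c astar\<bar> / Theta > 0"
      using \<open>\<bar>c astar\<bar> < Theta\<close> Theta_pos by (simp add: field_simps)
    have le: "(1 - \<bar>c astar\<bar> / Theta) * vertex_sum x \<le> peval c x" for x
    proof -
      have "\<bar>c astar\<bar> * \<bar>monom x astar\<bar> = \<bar>c astar\<bar> / Theta * (Theta * \<bar>monom x astar\<bar>)"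
        using Theta_pos by simp
      also have "\<dots> \<le> \<bar>c astar\<bar> / Theta * vertex_sum x"
        using Theta_mul_abs_monom_le Theta_pos by (intro mult_left_mono) auto
      finally show ?thesis
        using peval_eq[of x] abs_ge_minus_self[of "c astar * monom x astar"]
        by (simp add: abs_mult algebra_simps)
    qed
    show ?thesis by (rule that[OF pos le])
  qed
  then show ?thesis unfolding coercive_def
    by (intro filterlim_at_top_if_ge_const_mult[OF vertex_sum_tendsto_at_top[OF C3]] always_eventually)
      auto
qed

lemma zero_affine_comb_of_vertices:
  assumes "r = CARD('n)"
  obtains nu where "(\<Sum>j\<le>r. nu j) = 1" "(\<Sum>j\<le>r. nu j *\<^sub>R emb (\<alpha> j)) = 0"
proof -
  have inj_emb: "inj_on (emb \<circ> \<alpha>) {..r}"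
    using inj emb_inj by (auto simp: inj_on_def)
  have "aff_dim (emb ` \<alpha> ` {..r}) = int DIM(real ^ 'n)"
    using aff_dim_affine_independent[OF aff_indep] card_image[OF inj_emb] assms
    by (simp add: image_comp)
  then have "affine hull (emb ` \<alpha> ` {..r}) = UNIV"
    using aff_dim_eq_full by blast
  then have "0 \<in> affine hull (emb ` \<alpha> ` {..r})" by simp
  then obtain u where u: "sum u ((emb \<circ> \<alpha>) ` {..r}) = 1" "(\<Sum>v\<in>(emb \<circ> \<alpha>) ` {..r}. u v *\<^sub>R v) = 0"
    by (auto simp: affine_hull_finite image_comp)
  show ?thesis
    using u sum.reindex[OF inj_emb, of u] sum.reindex[OF inj_emb, of "\<lambda>v. u v *\<^sub>R v"]
    by (intro that[of "u \<circ> emb \<circ> \<alpha>"]) (simp_all add: o_def)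
qed

lemma abs_monom_astar_le:
  assumes mu: "\<And>j. j \<le> r \<Longrightarrow> mu j > 0" and comb: "(\<Sum>j\<le>r. mu j *\<^sub>R emb (\<alpha> j)) = emb astar"
  shows "\<bar>monom x astar\<bar> \<le> (vertex_sum x / cmin) powr (\<Sum>j\<le>r. mu j)"
proof -
  define B where "B = vertex_sum x / cmin"
  have "real (astar i) = (\<Sum>j\<le>r. mu j * real (\<alpha> j i))" for i
    using arg_cong[OF comb, of "\<lambda>v. v $ i"] by (simp add: emb_def)
  then have "\<bar>monom x astar\<bar> = (\<Prod>j\<le>r. \<bar>monom x (\<alpha> j)\<bar> powr mu j)"
    using mu by (intro abs_monom_eq_prod_powr) auto
  also have "\<dots> \<le> (\<Prod>j\<le>r. B powr mu j)"
    unfolding B_def using mu monom_vertex_le monom_vertex_nonneg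
    by (intro prod_mono conjI powr_mono2) (auto simp: less_imp_le)
  also have "\<dots> = B powr (\<Sum>j\<le>r. mu j)"
    by (cases "B = 0") (simp_all add: powr_sum)
  finally show ?thesis unfolding B_def .
qed

lemma coercive_if_full_dim:
  assumes r: "r = CARD('n)" and C3: "C3 c"
  shows "coercive (peval c)"
proof -
  obtain nu where nu: "(\<Sum>j\<le>r. nu j) = 1" "(\<Sum>j\<le>r. nu j *\<^sub>R emb (\<alpha> j)) = 0"
    using zero_affine_comb_of_vertices[OF r] by blast
  obtain t where t: "0 < t" "t < 1" "\<And>j. j \<in> {..r} \<Longrightarrow> lam j - t * nu j > 0"
    using exists_pos_perturbation[of "{..r}" lam nu] lam_pos by auto
  define mu where "mu j = lam j - t * nu j" for j
  have mu_sum: "(\<Sum>j\<le>r. mu j) = 1 - t"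
    unfolding mu_def using lam_sum nu(1) by (simp add: sum_subtractf sum_distrib_left[symmetric])
  have "(\<Sum>j\<le>r. (t * nu j) *\<^sub>R emb (\<alpha> j)) = t *\<^sub>R (\<Sum>j\<le>r. nu j *\<^sub>R emb (\<alpha> j))"
    by (simp add: scaleR_sum_right)
  then have "(\<Sum>j\<le>r. mu j *\<^sub>R emb (\<alpha> j)) = emb astar"
    unfolding mu_def using lam_comb nu(2) by (simp add: scaleR_diff_left sum_subtractf)
  then have astar_le: "\<bar>monom x astar\<bar> \<le> (vertex_sum x / cmin) powr (1 - t)" for x
    using abs_monom_astar_le[of mu] t(3) unfolding mu_sum by (simp add: mu_def)
  have bound:
    "\<bar>c astar * monom x astar\<bar> \<le> \<bar>c astar\<bar> / cmin powr (1 - t) * vertex_sum x powr (1 - t)" for x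
    using mult_left_mono[OF astar_le[of x], of "\<bar>c astar\<bar>"] vertex_sum_nonneg[of x] cmin_pos
    by (simp add: abs_mult powr_divide)
  then have "filterlim (\<lambda>x. vertex_sum x + c astar * monom x astar) at_top at_infinity"
    using t(1) bound by (intro filterlim_at_top_add_sublinear[OF vertex_sum_tendsto_at_top[OF C3],
        where s = "1 - t" and K = "\<bar>c astar\<bar> / cmin powr (1 - t)"]) simp_all
  then show ?thesis unfolding coercive_def peval_eq .
qed

lemma exists_balanced_point:
  assumes r: "r + 1 = CARD('n)" and C3: "C3 c" and B: "B > 0"
  obtains x \<tau> where "\<tau> > 0" "\<And>i. x $ i \<ge> 0" "x $ i0 = B"
    "\<And>j. j \<le> r \<Longrightarrow> c (\<alpha> j) / lam j * monom x (\<alpha> j) = \<tau>"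
proof -
  obtain k J where kJ: "\<And>i. k i \<ge> 1" "\<And>i. J i \<le> r" "\<And>i. \<alpha> (J i) = axis_exp i (2 * k i)" "inj J"
    using C3_obtain_axis_vertices[OF C3] by metis
  have J_onto: "J ` UNIV = {..r}"
    using kJ(2) card_image[OF kJ(4)] r by (intro card_subset_eq) auto
  have c_lam_pos: "c (\<alpha> j) > 0" "lam j > 0" if "j \<le> r" for j
    using that pos_vert lam_pos by auto
  define \<tau> where "\<tau> = c (\<alpha> (J i0)) / lam (J i0) * B ^ (2 * k i0)"
  have "\<tau> > 0" unfolding \<tau>_def using c_lam_pos[OF kJ(2)] B by simp
  define x :: "real ^ 'n" where "x = (\<chi> i. root (2 * k i) (lam (J i) * \<tau> / c (\<alpha> (J i))))"
  have x_nonneg: "x $ i \<ge> 0" for i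
    unfolding x_def using c_lam_pos[OF kJ(2)] \<open>\<tau> > 0\<close> by (simp add: real_root_ge_zero less_imp_le)
  have x_power: "(x $ i) ^ (2 * k i) = lam (J i) * \<tau> / c (\<alpha> (J i))" for i
    unfolding x_def using kJ(1)[of i] c_lam_pos[OF kJ(2)[of i]] \<open>\<tau> > 0\<close>
    by (simp add: real_root_pow_pos2)
  have "x $ i0 = B"
    unfolding x_def \<tau>_def using kJ(1)[of i0] c_lam_pos[OF kJ(2)[of i0]] B
    by (simp add: real_root_power_cancel)
  moreover have "c (\<alpha> j) / lam j * monom x (\<alpha> j) = \<tau>" if "j \<le> r" for j
  proof -
    have "j \<in> range J" using J_onto that by simp
    then obtain i where "j = J i" by blast
    then show ?thesis using c_lam_pos[OF that] by (simp add: kJ(3) monom_axis_exp x_power)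
  qed
  ultimately show ?thesis using that \<open>\<tau> > 0\<close> x_nonneg by blast
qed

lemma unbounded_nonpos_if_not_Theta_bound:
  assumes r: "r + 1 = CARD('n)" and C3: "C3 c"
    and not_bound: "\<not> (if even_exp astar then c astar > - Theta else \<bar>c astar\<bar> < Theta)"
  shows "\<exists>x. B \<le> norm x \<and> peval c x \<le> 0"
proof -
  obtain i0 where i0: "\<not> even_exp astar \<Longrightarrow> odd (astar i0)"
    unfolding even_exp_def by blast
  obtain x \<tau> where "\<tau> > 0" and x_nonneg: "\<And>i. x $ i \<ge> 0" and x_i0: "x $ i0 = max B 1"
    and balanced: "\<And>j. j \<le> r \<Longrightarrow> c (\<alpha> j) / lam j * monom x (\<alpha> j) = \<tau>"
    using exists_balanced_point[OF r C3, of "max B 1" i0] by (metis max.strict_coboundedI2 zero_less_one)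
  have vertex_sum_x: "vertex_sum x = \<tau>" and Theta_x: "Theta * \<bar>monom x astar\<bar> = \<tau>"
    using balanced_point_values[OF \<open>\<tau> > 0\<close> balanced] by auto
  have far: "B \<le> norm y" if "\<bar>y $ i0\<bar> = max B 1" for y :: "real ^ 'n"
    using component_le_norm_cart[of y i0] that by linarith
  have "monom x astar \<ge> 0"
    unfolding monom_def using x_nonneg by (simp add: prod_nonneg)
  consider "c astar \<le> - Theta" | "\<not> even_exp astar" "c astar \<ge> Theta"
    using not_bound by (auto split: if_splits simp: abs_less_iff)
  then show ?thesis
  proof cases
    case 1
    have "peval c x = \<tau> + c astar * \<bar>monom x astar\<bar>"
      using \<open>monom x astar \<ge> 0\<close> by (simp add: peval_eq vertex_sum_x)
    also have "\<dots> \<le> \<tau> - Theta * \<bar>monom x astar\<bar>"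
      using mult_right_mono[OF 1 abs_ge_zero] by simp
    finally show ?thesis using Theta_x far[of x] x_i0 by auto
  next
    case 2
    define y :: "real ^ 'n" where "y = (\<chi> l. if l = i0 then - x $ l else x $ l)"
    have "monom y (\<alpha> j) = monom x (\<alpha> j)" if "j \<le> r" for j
      using even_vert that unfolding y_def monom_reflect even_exp_def by simp
    then have "vertex_sum y = \<tau>"
      unfolding vertex_sum_x[symmetric] vertex_sum_def by simp
    moreover have "monom y astar = - \<bar>monom x astar\<bar>"
      using i0[OF 2(1)] \<open>monom x astar \<ge> 0\<close> unfolding y_def monom_reflect by simp
    ultimately have "peval c y = \<tau> - c astar * \<bar>monom x astar\<bar>"
      by (simp add: peval_eq)
    also have "\<dots> \<le> \<tau> - Theta * \<bar>monom x astar\<bar>"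
      using mult_right_mono[OF 2(2) abs_ge_zero] by simp
    finally show ?thesis using Theta_x far[of y] x_i0 by (auto simp: y_def)
  qed
qed

lemma Theta_bound_if_coercive:
  assumes "coercive (peval c)" "r + 1 = CARD('n)" "C3 c"
  shows "if even_exp astar then c astar > - Theta else \<bar>c astar\<bar> < Theta"
proof (rule ccontr)
  assume not_bound: "\<not> (if even_exp astar then c astar > - Theta else \<bar>c astar\<bar> < Theta)"
  obtain B where "\<And>x. B \<le> norm x \<Longrightarrow> 1 \<le> peval c x"
    using assms(1) unfolding coercive_def filterlim_at_top eventually_at_infinity by blast
  then show False
    using unbounded_nonpos_if_not_Theta_bound[OF assms(2,3) not_bound, of B] by fastforce
qed

theorem coercive_iff:
  "coercive (peval c) \<longleftrightarrow> C3 c \<and> (r = CARD('n) \<or> r + 1 = CARD('n) \<and>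
      (if even_exp astar then c astar > - Theta else \<bar>c astar\<bar> < Theta))"
proof
  assume coercive: "coercive (peval c)"
  then have "C3 c" by (rule coercive_imp_C3)
  then have "r = CARD('n) \<or> r + 1 = CARD('n)" using C3_imp_card_le r_le by linarith
  then show "C3 c \<and> (r = CARD('n) \<or> r + 1 = CARD('n) \<and>
      (if even_exp astar then c astar > - Theta else \<bar>c astar\<bar> < Theta))"
    using Theta_bound_if_coercive[OF coercive _ \<open>C3 c\<close>] \<open>C3 c\<close> by blast
qed (use coercive_if_full_dim coercive_if_Theta_bound in blast)

end

theorem mainTheorem4:
  fixes c :: "('n::finite \<Rightarrow> nat) \<Rightarrow> real"
    and r :: nat
    and \<alpha> :: "nat \<Rightarrow> ('n \<Rightarrow> nat)"
    and astar :: "'n \<Rightarrow> nat"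
    and lam :: "nat \<Rightarrow> real"
  assumes r_le: "r \<le> CARD('n)"
    and supp: "supp_poly c = \<alpha> ` {..r} \<union> {astar}"
    and inj: "inj_on \<alpha> {..r}"
    and astar_notin: "astar \<notin> \<alpha> ` {..r}"
    and even_vert: "\<forall>j\<le>r. even_exp (\<alpha> j)"
    and pos_vert: "\<forall>j\<le>r. c (\<alpha> j) > 0"
    and vertices: "{v. v extreme_point_of convex hull (emb ` supp_poly c)} = emb ` \<alpha> ` {..r}"
    and aff_indep: "\<not> affine_dependent (emb ` \<alpha> ` {..r})"
    and lam_pos: "\<forall>j\<le>r. lam j > 0"
    and lam_sum: "(\<Sum>j\<le>r. lam j) = 1"
    and lam_comb: "(\<Sum>j\<le>r. lam j *\<^sub>R emb (\<alpha> j)) = emb astar"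
  shows "coercive (peval c) \<longleftrightarrow>
    ((r = CARD('n) \<and> C1 c \<and> C2 c \<and> C3 c) \<or>
     (r = CARD('n) - 1 \<and> C1 c \<and> C2 c \<and> C3 c \<and>
        (let \<Theta> = (\<Prod>j\<le>r. (c (\<alpha> j) / lam j) powr (lam j)) in
          (if even_exp astar then c astar > - \<Theta> else \<bar>c astar\<bar> < \<Theta>))))"
proof -
  interpret circuit_poly c r \<alpha> astar lam
    using r_le supp inj astar_notin even_vert pos_vert aff_indep lam_pos lam_sum lam_comb
    by unfold_locales
  have "CARD('n) > 0" by simp
  then show ?thesis using coercive_iff C1 C2 unfolding Theta_def Let_def by auto
qed

end
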